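(* Let $\phi:X\to Y$ be a continuous surjection from a compact metric space $X$ onto a compact Hausdorff space $Y$. Then $\phi$ is almost one-to-one if and only if $\phi$ is both almost open and weakly almost one-to-one.
   Context: $\phi$ is almost open if $\phi(U)$ has nonempty interior in $Y$ for every nonempty open $U\subset X$. Let $Y_0=\{y\in Y:\phi^{-1}(y)\text{ is a singleton}\}$. $\phi$ is weakly almost one-to-one if $Y_0$ is dense in $Y$, and almost one-to-one if $X_0=\phi^{-1}(Y_0)$ is dense in $X$. *)

theory Defs
  imports "HOL-Analysis.Analysis"
begin

definition almost_open :: "'a topology \<Rightarrow> 'b topology \<Rightarrow> ('a \<Rightarrow> 'b) \<Rightarrow> bool" where
  "almost_open X Y phi \<longleftrightarrow>
     (\<forall>U. openin X U \<and> U \<noteq> {} \<longrightarrow> Y interior_of (phi ` U) \<noteq> {})"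

definition singleton_fibres :: "'a topology \<Rightarrow> 'b topology \<Rightarrow> ('a \<Rightarrow> 'b) \<Rightarrow> 'b set" where
  "singleton_fibres X Y phi =
     {y \<in> topspace Y. is_singleton {x \<in> topspace X. phi x = y}}"

definition weakly_almost_one_to_one :: "'a topology \<Rightarrow> 'b topology \<Rightarrow> ('a \<Rightarrow> 'b) \<Rightarrow> bool" where
  "weakly_almost_one_to_one X Y phi \<longleftrightarrow>
     Y closure_of (singleton_fibres X Y phi) = topspace Y"

definition almost_one_to_one :: "'a topology \<Rightarrow> 'b topology \<Rightarrow> ('a \<Rightarrow> 'b) \<Rightarrow> bool" where
  "almost_one_to_one X Y phi \<longleftrightarrow>
     X closure_of {x \<in> topspace X. phi x \<in> singleton_fibres X Y phi} = topspace X"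

end

theory Submission
  imports Defs
begin

text \<open>A continuous map from a compact space to a Hausdorff space is closed. For a closed
surjection, a point x whose fibre is a singleton has a saturated open neighbourhood inside
any open U \<ni> x, namely the complement of the preimage of the closed set phi(X - U); so phi(U)
contains a neighbourhood of phi x. Hence points of X0 in U witness almost openness, and the
continuous image of the dense set X0 is dense in Y. Conversely, if phi is almost open and
Y0 is dense, every nonempty open U has an open interior of phi(U) that meets Y0, and a
preimage in U of such a point lies in X0.\<close>

lemma singleton_fibres_unique_preimage:
  assumes "x \<in> topspace X" "phi x \<in> singleton_fibres X Y phi"
    and "w \<in> topspace X" "phi w = phi x"
  shows "w = x"
proof -
  obtain z where z: "{v \<in> topspace X. phi v = phi x} = {z}"
    using assms(2) unfolding singleton_fibres_def is_singleton_def by auto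
  have "x \<in> {z}" "w \<in> {z}"
    using assms(1,3,4) by (simp_all flip: z)
  then show ?thesis
    by simp
qed

lemma closed_map_singleton_fibre_in_interior_of_image:
  assumes "closed_map X Y phi" "phi ` topspace X = topspace Y"
    and "openin X U" "x \<in> U" "phi x \<in> singleton_fibres X Y phi"
  shows "phi x \<in> Y interior_of (phi ` U)"
proof -
  have x_top: "x \<in> topspace X"
    using assms(3,4) openin_subset by blast
  have "closedin X (topspace X - U)"
    using assms(3) by (simp add: closedin_diff)
  then have "closedin Y (phi ` (topspace X - U))"
    using assms(1) closed_map_def by blast
  then have V_open: "openin Y (topspace Y - phi ` (topspace X - U))"
    by (simp add: openin_diff)
  have "phi x \<notin> phi ` (topspace X - U)"
  proof
    assume "phi x \<in> phi ` (topspace X - U)"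
    then obtain w where w: "phi x = phi w" "w \<in> topspace X - U"
      by (rule imageE)
    then have "w = x"
      using singleton_fibres_unique_preimage[OF x_top assms(5)] by simp
    then show False
      using w(2) assms(4) by simp
  qed
  moreover have "phi x \<in> topspace Y"
    using assms(5) by (simp add: singleton_fibres_def)
  moreover have "topspace Y - phi ` (topspace X - U) \<subseteq> Y interior_of (phi ` U)"
  proof (rule interior_of_maximal[OF _ V_open])
    show "topspace Y - phi ` (topspace X - U) \<subseteq> phi ` U"
      unfolding assms(2)[symmetric] by blast
  qed
  ultimately show ?thesis
    by blast
qed

lemma almost_one_to_one_imp_almost_open:
  assumes "closed_map X Y phi" "phi ` topspace X = topspace Y"
    and "almost_one_to_one X Y phi"
  shows "almost_open X Y phi"
  unfolding almost_open_def
proof (intro allI impI)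
  let ?X0 = "{x \<in> topspace X. phi x \<in> singleton_fibres X Y phi}"
  fix U
  assume U: "openin X U \<and> U \<noteq> {}"
  have "?X0 \<inter> U \<noteq> {}"
    using assms(3) U dense_intersects_open[of X ?X0]
    unfolding almost_one_to_one_def by (simp del: mem_Collect_eq)
  then obtain x where "x \<in> U" "phi x \<in> singleton_fibres X Y phi"
    by blast
  then show "Y interior_of (phi ` U) \<noteq> {}"
    using closed_map_singleton_fibre_in_interior_of_image[OF assms(1,2)] U by blast
qed

lemma almost_one_to_one_imp_weakly_almost_one_to_one:
  assumes "continuous_map X Y phi" "phi ` topspace X = topspace Y"
    and "almost_one_to_one X Y phi"
  shows "weakly_almost_one_to_one X Y phi"
proof -
  let ?X0 = "{x \<in> topspace X. phi x \<in> singleton_fibres X Y phi}"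
  have "topspace Y = phi ` (X closure_of ?X0)"
    using assms(2,3) unfolding almost_one_to_one_def by simp
  also have "\<dots> \<subseteq> Y closure_of (phi ` ?X0)"
    by (rule continuous_map_image_closure_subset[OF assms(1)])
  also have "\<dots> \<subseteq> Y closure_of (singleton_fibres X Y phi)"
    by (rule closure_of_mono) auto
  finally show ?thesis
    unfolding weakly_almost_one_to_one_def
    by (rule subset_antisym[OF closure_of_subset_topspace])
qed

lemma almost_open_weakly_almost_one_to_one_imp_almost_one_to_one:
  assumes "almost_open X Y phi" "weakly_almost_one_to_one X Y phi"
  shows "almost_one_to_one X Y phi"
proof -
  let ?Y0 = "singleton_fibres X Y phi"
  let ?X0 = "{x \<in> topspace X. phi x \<in> ?Y0}"
  have Y0_meets_open: "?Y0 \<inter> T \<noteq> {}" if "openin Y T" "T \<noteq> {}" for T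
    using assms(2) that dense_intersects_open[of Y ?Y0]
    unfolding weakly_almost_one_to_one_def by blast
  have "?X0 \<inter> U \<noteq> {}" if U: "openin X U" "U \<noteq> {}" for U
  proof -
    have "Y interior_of (phi ` U) \<noteq> {}"
      using assms(1) U unfolding almost_open_def by blast
    then have "?Y0 \<inter> Y interior_of (phi ` U) \<noteq> {}"
      by (intro Y0_meets_open) simp_all
    then obtain y where y: "y \<in> ?Y0" "y \<in> phi ` U"
      using interior_of_subset[of Y "phi ` U"] by blast
    obtain w where w: "y = phi w" "w \<in> U"
      using y(2) by (rule imageE)
    have "w \<in> topspace X"
      using openin_subset[OF U(1)] w(2) by blast
    then have "w \<in> ?X0 \<inter> U"
      using w y(1) by simp
    then show ?thesis
      by blast
  qed
  then show ?thesis
    unfolding almost_one_to_one_def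
    using dense_intersects_open[of X ?X0] by (simp del: mem_Collect_eq)
qed

lemma almost_one_to_one_iff_almost_open_weakly_almost_one_to_one:
  assumes "continuous_map X Y phi" "closed_map X Y phi" "phi ` topspace X = topspace Y"
  shows "almost_one_to_one X Y phi \<longleftrightarrow>
         almost_open X Y phi \<and> weakly_almost_one_to_one X Y phi"
  using almost_one_to_one_imp_almost_open[OF assms(2,3)]
    almost_one_to_one_imp_weakly_almost_one_to_one[OF assms(1,3)]
    almost_open_weakly_almost_one_to_one_imp_almost_one_to_one
  by blast

theorem proposition2p3:
  fixes S :: "'a::metric_space set" and Y :: "'b topology" and phi :: "'a \<Rightarrow> 'b"
  assumes "compact S"
    and "compact_space Y" and "Hausdorff_space Y"
    and "continuous_map (top_of_set S) Y phi"
    and "phi ` S = topspace Y"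
  shows "almost_one_to_one (top_of_set S) Y phi \<longleftrightarrow>
         almost_open (top_of_set S) Y phi \<and> weakly_almost_one_to_one (top_of_set S) Y phi"
proof -
  have "compact_space (top_of_set S)"
    using assms(1) by (simp add: compact_space_subtopology compactin_euclidean_iff)
  then have "closed_map (top_of_set S) Y phi"
    using continuous_imp_closed_map_gen assms(3,4) Hausdorff_imp_kc_space by blast
  moreover have "phi ` topspace (top_of_set S) = topspace Y"
    using assms(5) by simp
  ultimately show ?thesis
    using almost_one_to_one_iff_almost_open_weakly_almost_one_to_one assms(4) by blast
qed

end
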